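(* Assume (A1)–(A4). Let $\mathbf v\in C^1([0,T]\times\overline\Omega)^d$ satisfy $\mathrm{div}_x\mathbf v=0$ in $Q$ and $\mathbf v\cdot\mathbf n=0$ on $(0,T)\times\partial\Omega$. Let $\psi:[0,T]\times\overline\Omega\times[r_0,\infty)\to\mathbb{R}$ and $\phi:[0,T]\times\overline\Omega\to\mathbb{R}$ be regular in the sense below, satisfy the Neumann conditions $\nabla_x\psi\cdot\mathbf n=0$, $\nabla_x\phi\cdot\mathbf n=0$ on $\partial\Omega$, initial conditions $\psi(0)=\psi_0\ge0$, $\phi(0)=\phi_0\ge0$, and (almost everywhere) the modified system $$\partial_t\psi+\mathbf v\cdot\nabla_x\psi-A(r)\Delta_x\psi=-\beta(r,\mathbf v,\mathbf D_x\mathbf v)\psi-\tau(r)\phi\,\partial_r\psi_++2\int_r^\infty\beta(\tilde r,\mathbf v,\mathbf D_x\mathbf v)\kappa(r,\tilde r)\psi_+(t,x,\tilde r)\,d\tilde r,$$ $$\partial_t\phi+\mathbf v\cdot\nabla_x\phi-A_0\Delta_x\phi=-\phi\int_{r_0}^\infty\partial_r(r\tau(r))\psi_+\,dr+2\int_0^{r_0}r\int_{r_0}^\infty\beta(\tilde r,\mathbf v,\mathbf D_x\mathbf v)\kappa(r,\tilde r)\psi_+(t,x,\tilde r)\,d\tilde r\,dr.$$ Then $\psi\ge0$ and $\phi\ge0$ almost everywhere.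
   Context: Fix $d\in\{2,3\}$, $T>0$, a bounded domain $\Omega\subset\mathbb{R}^d$ with $\mathcal C^{1,1}$ boundary and unit outward normal $\mathbf n$, $Q:=(0,T)\times\Omega$, $r_0>0$, constants $K>0$, $A_0>0$. $s_+:=\max(s,0)$. $\mathbf D_x\mathbf v:=\frac12(\nabla_x\mathbf v+(\nabla_x\mathbf v)^T)$ and $\beta(r,\mathbf v,\mathbf D_x\mathbf v)$ means $\beta(r,\mathbf v(t,x),\mathbf D_x\mathbf v(t,x))$. Regularity: $\psi,\partial_t\psi,\partial_r\psi,\nabla_x\psi,\nabla_x^2\psi$ and $\phi,\partial_t\phi,\nabla_x\phi,\nabla_x^2\phi$ are continuous on their closed domains, and for every $m\ge0$ the function $(1+r)^m(|\psi|+|\partial_t\psi|+|\partial_r\psi|+|\nabla_x\psi|+|\nabla_x^2\psi|)$ is bounded on $[0,T]\times\overline\Omega\times[r_0,\infty)$. (A1) $A:(r_0,\infty)\to(0,\infty)$ continuous, nonincreasing, $\lim_{r\to\infty}A(r)=0$. (A2) $\tau:[r_0,\infty)\to[0,\infty)$ nondecreasing, bounded, globally Lipschitz, $\tau(r_0)=0$, $\tau'(r_0)>0$, $K^{-1}r_0\le\tau(r)+r\tau'(r)$ and $\tau(r)+\tau'(r)+r\tau'(r)+\tau(r)/r\le K$. (A3) $\beta:(r_0,\infty)\times\mathbb{R}^d\times\mathbb{R}^{d\times d}\to\mathbb{R}$ smooth, increasing in $r$, $0<\beta\le K$; $\eta(r):=\sup_{\mathbf u,\mathbf D}\partial_r\beta(r,\mathbf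 u,\mathbf D)/\beta(r,\mathbf u,\mathbf D)$ is measurable, nonnegative, $(1+r)\eta(r)\le K$, $\int_{r_0}^\infty\eta\le K$. (A4) $\kappa(r,\tilde r)=1/\tilde r$ if $\tilde r>r_0$ and $0<r<\tilde r$; $\kappa=0$ otherwise. *)

theory Defs
  imports "HOL-Analysis.Analysis"
begin

text \<open>Bounded domain (open, connected, bounded) with C^{1,1} boundary, described by a
  global defining function rho (C^1 with globally Lipschitz gradient g) such that
  Omega = {rho < 0} and g does not vanish on the boundary of Omega;
  nrm is the unit outward normal g / |g| on the boundary.\<close>
definition C11_domain_with_normal :: "(real^'n) set \<Rightarrow> (real^'n \<Rightarrow> real^'n) \<Rightarrow> bool"
  where "C11_domain_with_normal \<Omega> nrm \<longleftrightarrow>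
    open \<Omega> \<and> connected \<Omega> \<and> bounded \<Omega> \<and> \<Omega> \<noteq> {} \<and>
    (\<exists>\<rho> g L. (\<forall>x. (\<rho> has_derivative (\<lambda>h. g x \<bullet> h)) (at x)) \<and>
       (\<forall>x y. norm (g x - g y) \<le> L * norm (x - y)) \<and>
       \<Omega> = {x. \<rho> x < 0} \<and>
       (\<forall>x\<in>frontier \<Omega>. g x \<noteq> 0 \<and> nrm x = (1 / norm (g x)) *\<^sub>R g x))"

fun Ck_on :: "nat \<Rightarrow> ('a::euclidean_space) set \<Rightarrow> ('a \<Rightarrow> real) \<Rightarrow> bool" where
  "Ck_on 0 S f = continuous_on S f"
| "Ck_on (Suc k) S f = (f differentiable_on S \<and>
     (\<forall>v. Ck_on k S (\<lambda>x. frechet_derivative f (at x) v)))"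

definition smooth_on :: "('a::euclidean_space) set \<Rightarrow> ('a \<Rightarrow> real) \<Rightarrow> bool" where
  "smooth_on S f \<longleftrightarrow> (\<forall>k. Ck_on k S f)"

definition kappa :: "real \<Rightarrow> real \<Rightarrow> real \<Rightarrow> real" where
  "kappa r0 r rr = (if rr > r0 \<and> 0 < r \<and> r < rr then 1 / rr else 0)"

definition eta :: "(real \<Rightarrow> real^'n \<Rightarrow> real^'n^'n \<Rightarrow> real) \<Rightarrow> real \<Rightarrow> real" where
  "eta \<beta> r = (SUP uD. deriv (\<lambda>s. \<beta> s (fst uD) (snd uD)) r / \<beta> r (fst uD) (snd uD))"

definition lap :: "real^'n^'n \<Rightarrow> real" where
  "lap H = (\<Sum>i\<in>UNIV. H $ i $ i)"

definition symgrad :: "real^'n^'n \<Rightarrow> real^'n^'n" where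
  "symgrad J = (1/2) *\<^sub>R (J + transpose J)"

definition pos :: "real \<Rightarrow> real" where
  "pos s = max s 0"

end

theory Submission
  imports Defs
begin

text \<open>Both equations are handled by the weak minimum principle. Since they hold only almost
  everywhere, continuity first upgrades them to pointwise inequalities on the open set where the
  solution is negative, as a null set contains no nonempty open set. At a negative minimum of
  \<open>exp (- \<lambda> t) u\<close> over \<open>[0, t] \<times> closure \<Omega>\<close> the time derivative is at most \<open>\<lambda> u\<close>, the
  gradient vanishes and the Laplacian is nonnegative; on the boundary this uses that the Neumann
  condition makes the gradient tangential while an open half-space of directions points into
  \<open>\<Omega>\<close>. For \<open>\<psi>\<close> the growth term vanishes where \<open>\<psi> < 0\<close> and the fragmentation gain is
  nonnegative; for \<open>\<phi>\<close> the consumption coefficient is bounded below because \<open>\<psi>\<close> decays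
  like \<open>r\<^sup>-\<^sup>2\<close>. Either way the equation is violated at the minimum.\<close>

section \<open>One-sided extrema of real functions\<close>

lemma left_min_imp_deriv_nonpos:
  fixes f :: "real \<Rightarrow> real"
  assumes f': "(f has_real_derivative D) (at t within {a..b})"
    and "a < t" "t \<le> b" and min: "\<forall>s\<in>{a..t}. f t \<le> f s"
  shows "D \<le> 0"
proof (rule ccontr)
  assume "\<not> D \<le> 0"
  then obtain d where d: "d > 0" "\<forall>h>0. t - h \<in> {a..b} \<longrightarrow> h < d \<longrightarrow> f (t - h) < f t"
    using has_real_derivative_pos_inc_left[OF f'] by auto
  define h where "h = min d (t - a) / 2"
  have h: "0 < h" "h < d" "t - h \<in> {a..t}"
    using d(1) \<open>a < t\<close> by (auto simp: h_def min_def field_simps)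
  then have "f (t - h) < f t" using d(2) \<open>t \<le> b\<close> by auto
  moreover have "f t \<le> f (t - h)" using min h(3) by blast
  ultimately show False by simp
qed

lemma weighted_left_min_imp_deriv_le:
  fixes f :: "real \<Rightarrow> real"
  assumes f': "(f has_real_derivative D) (at t within {0..T})" and "0 < t" "t \<le> T"
    and min: "\<forall>s\<in>{0..t}. exp (- l * t) * f t \<le> exp (- l * s) * f s"
  shows "D \<le> l * f t"
proof -
  have "((\<lambda>s. exp (- l * s)) has_real_derivative exp (- l * t) * (- l)) (at t within {0..T})"
    by (auto intro!: derivative_eq_intros)
  from DERIV_mult'[OF this f']
  have "((\<lambda>s. exp (- l * s) * f s) has_real_derivative
      exp (- l * t) * (- l) * f t + exp (- l * t) * D) (at t within {0..T})"
    by (simp add: algebra_simps)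
  then have "exp (- l * t) * (- l) * f t + exp (- l * t) * D \<le> 0"
    by (rule left_min_imp_deriv_nonpos) (use assms in auto)
  then have "exp (- l * t) * (D - l * f t) \<le> 0" by (simp add: algebra_simps)
  then show ?thesis by (simp add: mult_le_0_iff)
qed

lemma right_min_imp_deriv_nonneg:
  fixes g :: "real \<Rightarrow> real"
  assumes g': "(g has_real_derivative D) (at a within {a..b})"
    and "a < b" and min: "\<forall>s\<in>{a..b}. g a \<le> g s"
  shows "0 \<le> D"
proof (rule ccontr)
  assume "\<not> 0 \<le> D"
  then obtain d where d: "d > 0" "\<forall>h>0. a + h \<in> {a..b} \<longrightarrow> h < d \<longrightarrow> g (a + h) < g a"
    using has_real_derivative_neg_dec_right[OF g'] by auto
  define h where "h = min d (b - a) / 2"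
  have h: "0 < h" "h < d" "a + h \<in> {a..b}"
    using d(1) \<open>a < b\<close> by (auto simp: h_def min_def field_simps)
  then have "g (a + h) < g a" using d(2) by blast
  moreover have "g a \<le> g (a + h)" using min h(3) by blast
  ultimately show False by simp
qed

lemma right_min_imp_second_deriv_nonneg:
  fixes g g' :: "real \<Rightarrow> real"
  assumes g': "\<forall>s\<in>{a..b}. (g has_real_derivative g' s) (at s within {a..b})"
    and g'': "(g' has_real_derivative D) (at a within {a..b})"
    and "g' a = 0" "a < b" and min: "\<forall>s\<in>{a..b}. g a \<le> g s"
  shows "0 \<le> D"
proof (rule ccontr)
  assume "\<not> 0 \<le> D"
  then obtain d where d: "d > 0" "\<forall>h>0. a + h \<in> {a..b} \<longrightarrow> h < d \<longrightarrow> g' (a + h) < g' a"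
    using has_real_derivative_neg_dec_right[OF g''] by auto
  define c where "c = a + min d (b - a) / 2"
  have c: "a < c" "c \<le> b" "c - a < d"
    using d(1) \<open>a < b\<close> by (auto simp: c_def min_def field_simps)
  have "(g has_derivative (*) (g' s)) (at s within {a..c})" if "s \<in> {a..c}" for s
  proof -
    have "(g has_real_derivative g' s) (at s within {a..c})"
      by (rule has_field_derivative_subset[OF g'[rule_format]]) (use that c in auto)
    then show ?thesis by (simp add: has_field_derivative_def)
  qed
  then obtain s where s: "s \<in> {a<..<c}" "g c - g a = g' s * (c - a)"
    using mvt_simple[OF c(1), of g "\<lambda>s. (*) (g' s)"] by auto
  have "g' s < g' a"
    using d(2)[rule_format, of "s - a"] s c by simp
  then have "g' s * (c - a) < 0" using \<open>g' a = 0\<close> c by (simp add: mult_neg_pos)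
  then have "g c < g a" using s by simp
  moreover have "g a \<le> g c" using min c by simp
  ultimately show False by simp
qed

section \<open>Minima on the closure of a domain\<close>

lemma has_derivative_along_line:
  fixes F :: "'a::real_normed_vector \<Rightarrow> 'b::real_normed_vector"
  assumes "(F has_derivative F') (at (x0 + s *\<^sub>R h) within C)" "\<forall>u\<in>S. x0 + u *\<^sub>R h \<in> C"
  shows "((\<lambda>u. F (x0 + u *\<^sub>R h)) has_derivative (\<lambda>u. F' (u *\<^sub>R h))) (at s within S)"
proof -
  have line: "((\<lambda>u. x0 + u *\<^sub>R h) has_derivative (\<lambda>u. u *\<^sub>R h)) (at s within S)"
    by (auto intro!: derivative_eq_intros)
  have "(F has_derivative F') (at ((\<lambda>u. x0 + u *\<^sub>R h) s) within (\<lambda>u. x0 + u *\<^sub>R h) ` S)"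
    by (rule has_derivative_subset[OF assms(1)]) (use assms(2) in auto)
  from diff_chain_within[OF line this] show ?thesis by (simp add: o_def)
qed

lemma has_real_derivative_along_line:
  fixes f :: "'a::real_inner \<Rightarrow> real"
  assumes "(f has_derivative (\<lambda>k. g \<bullet> k)) (at (x0 + s *\<^sub>R h) within C)" "\<forall>u\<in>S. x0 + u *\<^sub>R h \<in> C"
  shows "((\<lambda>u. f (x0 + u *\<^sub>R h)) has_real_derivative g \<bullet> h) (at s within S)"
proof -
  have "(\<lambda>u. g \<bullet> (u *\<^sub>R h)) = (*) (g \<bullet> h)" by (auto simp: fun_eq_iff)
  then show ?thesis
    using has_derivative_along_line[OF assms] by (simp add: has_field_derivative_def)
qed

definition feasible_direction :: "'a::real_vector set \<Rightarrow> 'a \<Rightarrow> 'a \<Rightarrow> bool" where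
  "feasible_direction C x h \<longleftrightarrow> (\<exists>\<delta>>0. \<forall>s\<in>{0..\<delta>}. x + s *\<^sub>R h \<in> C)"

lemma min_imp_directional_deriv_nonneg:
  fixes f :: "'a::real_inner \<Rightarrow> real"
  assumes f': "\<forall>y\<in>C. (f has_derivative (\<lambda>h. fx y \<bullet> h)) (at y within C)"
    and "feasible_direction C x0 h" and min: "\<forall>y\<in>C. f x0 \<le> f y"
  shows "0 \<le> fx x0 \<bullet> h"
proof -
  obtain \<delta> where \<delta>: "\<delta> > 0" "\<forall>s\<in>{0..\<delta>}. x0 + s *\<^sub>R h \<in> C"
    using assms(2) unfolding feasible_direction_def by blast
  have "x0 \<in> C" using \<delta> by force
  have "((\<lambda>u. f (x0 + u *\<^sub>R h)) has_real_derivative fx x0 \<bullet> h) (at 0 within {0..\<delta>})"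
    using \<delta> f' \<open>x0 \<in> C\<close> by (intro has_real_derivative_along_line) auto
  then show ?thesis
    by (rule right_min_imp_deriv_nonneg) (use \<delta> min in auto)
qed

lemma min_imp_directional_second_deriv_nonneg:
  fixes f :: "real^'n \<Rightarrow> real"
  assumes f': "\<forall>y\<in>C. (f has_derivative (\<lambda>h. fx y \<bullet> h)) (at y within C)"
    and f'': "\<forall>y\<in>C. (fx has_derivative (\<lambda>h. fxx y *v h)) (at y within C)"
    and "feasible_direction C x0 h" and min: "\<forall>y\<in>C. f x0 \<le> f y" and "fx x0 = 0"
  shows "0 \<le> (fxx x0 *v h) \<bullet> h"
proof -
  obtain \<delta> where \<delta>: "\<delta> > 0" "\<forall>s\<in>{0..\<delta>}. x0 + s *\<^sub>R h \<in> C"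
    using assms(3) unfolding feasible_direction_def by blast
  have "x0 \<in> C" using \<delta> by force
  have "((\<lambda>u. fx (x0 + u *\<^sub>R h)) has_derivative (\<lambda>u. fxx x0 *v (u *\<^sub>R h))) (at 0 within {0..\<delta>})"
    using \<delta> f'' \<open>x0 \<in> C\<close> by (intro has_derivative_along_line) auto
  then have "((\<lambda>u. fx (x0 + u *\<^sub>R h) \<bullet> h) has_derivative (\<lambda>u. (fxx x0 *v (u *\<^sub>R h)) \<bullet> h))
      (at 0 within {0..\<delta>})"
    by (auto intro!: derivative_eq_intros)
  moreover have "(\<lambda>u. (fxx x0 *v (u *\<^sub>R h)) \<bullet> h) = (*) ((fxx x0 *v h) \<bullet> h)"
    by (auto simp: fun_eq_iff matrix_vector_mult_scaleR)
  ultimately have g'': "((\<lambda>u. fx (x0 + u *\<^sub>R h) \<bullet> h) has_real_derivative (fxx x0 *v h) \<bullet> h)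
      (at 0 within {0..\<delta>})"
    by (simp add: has_field_derivative_def)
  show ?thesis
  proof (rule right_min_imp_second_deriv_nonneg[where g = "\<lambda>u. f (x0 + u *\<^sub>R h)", OF _ g''])
    show "\<forall>s\<in>{0..\<delta>}. ((\<lambda>u. f (x0 + u *\<^sub>R h)) has_real_derivative fx (x0 + s *\<^sub>R h) \<bullet> h)
        (at s within {0..\<delta>})"
      using \<delta> f' by (auto intro!: has_real_derivative_along_line)
  qed (use \<delta> min \<open>fx x0 = 0\<close> in auto)
qed

lemma feasible_direction_interior:
  fixes C :: "'a::real_normed_vector set"
  assumes "x \<in> interior C"
  shows "feasible_direction C x h"
proof -
  obtain e where e: "e > 0" "ball x e \<subseteq> C"
    using assms by (meson mem_interior)
  have h1: "0 < norm h + 1" using norm_ge_zero[of h] by linarith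
  define \<delta> where "\<delta> = e / (2 * (norm h + 1))"
  have "\<delta> > 0" unfolding \<delta>_def using e h1 by simp
  moreover have "x + s *\<^sub>R h \<in> C" if "s \<in> {0..\<delta>}" for s
  proof -
    have "s * norm h \<le> \<delta> * (norm h + 1)" using that by (intro mult_mono) auto
    also have "\<dots> = e / 2" using h1 by (simp add: \<delta>_def field_simps)
    finally show ?thesis using e that by (auto simp: dist_norm)
  qed
  ultimately show ?thesis unfolding feasible_direction_def by blast
qed

lemma quadratic_form_nonneg_of_halfspace:
  fixes M :: "real^'n^'n"
  assumes "g \<noteq> 0" and half: "\<forall>h. g \<bullet> h < 0 \<longrightarrow> 0 \<le> (M *v h) \<bullet> h"
  shows "0 \<le> (M *v h) \<bullet> h"
proof -
  have closed_half: "0 \<le> (M *v h) \<bullet> h" if "g \<bullet> h \<le> 0" for h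
  proof (rule tendsto_lowerbound)
    have "((\<lambda>e. (M *v h - e *\<^sub>R (M *v g)) \<bullet> (h - e *\<^sub>R g))
        \<longlongrightarrow> (M *v h - 0 *\<^sub>R (M *v g)) \<bullet> (h - 0 *\<^sub>R g)) (at_right 0)"
      by (intro tendsto_intros)
    then show "((\<lambda>e. (M *v (h - e *\<^sub>R g)) \<bullet> (h - e *\<^sub>R g)) \<longlongrightarrow> (M *v h) \<bullet> h) (at_right 0)"
      by (simp add: matrix_vector_mult_diff_distrib matrix_vector_mult_scaleR)
    show "\<forall>\<^sub>F e in at_right 0. 0 \<le> (M *v (h - e *\<^sub>R g)) \<bullet> (h - e *\<^sub>R g)"
    proof (rule eventually_at_right_less[THEN eventually_mono])
      fix e :: real
      assume "0 < e"
      then have "0 < e * (g \<bullet> g)" using \<open>g \<noteq> 0\<close> by simp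
      then have "g \<bullet> (h - e *\<^sub>R g) < 0"
        using \<open>g \<bullet> h \<le> 0\<close> by (simp add: inner_diff_right)
      then show "0 \<le> (M *v (h - e *\<^sub>R g)) \<bullet> (h - e *\<^sub>R g)" using half by blast
    qed
  qed simp
  show ?thesis
  proof (cases "g \<bullet> h \<le> 0")
    case False
    then have "0 \<le> (M *v ((- 1) *\<^sub>R h)) \<bullet> ((- 1) *\<^sub>R h)" by (intro closed_half) simp
    then show ?thesis unfolding matrix_vector_mult_scaleR by simp
  qed (rule closed_half)
qed

lemma C11_domain_frontier_inward:
  assumes dom: "C11_domain_with_normal \<Omega> nrm" and x0: "x0 \<in> frontier \<Omega>"
  obtains g where "g \<noteq> 0" "nrm x0 = (1 / norm g) *\<^sub>R g"
    "\<forall>h. g \<bullet> h < 0 \<longrightarrow> feasible_direction (closure \<Omega>) x0 h"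
proof -
  obtain \<rho> g where \<rho>: "\<forall>x. (\<rho> has_derivative (\<lambda>h. g x \<bullet> h)) (at x)" "\<Omega> = {x. \<rho> x < 0}"
    and g: "\<forall>x\<in>frontier \<Omega>. g x \<noteq> 0 \<and> nrm x = (1 / norm (g x)) *\<^sub>R g x"
    using dom unfolding C11_domain_with_normal_def by blast
  have "continuous_on UNIV \<rho>"
    using \<rho>(1) has_derivative_continuous continuous_at_imp_continuous_on by blast
  then have "closure \<Omega> \<subseteq> {x. \<rho> x \<le> 0}"
    unfolding \<rho>(2) by (intro closure_minimal) (auto intro: closed_Collect_le)
  moreover have "open \<Omega>" using dom unfolding C11_domain_with_normal_def by blast
  then have "x0 \<in> closure \<Omega>" "x0 \<notin> \<Omega>" using x0 by (auto simp: frontier_def interior_open)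
  ultimately have "\<rho> x0 = 0" using \<rho>(2) by fastforce
  have "feasible_direction (closure \<Omega>) x0 h" if inward: "g x0 \<bullet> h < 0" for h
  proof -
    have "((\<lambda>u. \<rho> (x0 + u *\<^sub>R h)) has_real_derivative g x0 \<bullet> h) (at 0 within UNIV)"
      using \<rho>(1) by (intro has_real_derivative_along_line) auto
    from has_real_derivative_neg_dec_right[OF this inward]
    obtain d where d: "d > 0" "\<forall>s>0. s < d \<longrightarrow> \<rho> (x0 + s *\<^sub>R h) < 0"
      using \<open>\<rho> x0 = 0\<close> by auto
    have "x0 + s *\<^sub>R h \<in> closure \<Omega>" if "s \<in> {0..d/2}" for s
    proof (cases "s = 0")
      case True
      then show ?thesis using \<open>x0 \<in> closure \<Omega>\<close> by simp
    next
      case False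
      then have "x0 + s *\<^sub>R h \<in> \<Omega>" using d that \<rho>(2) by auto
      then show ?thesis using closure_subset by blast
    qed
    then show ?thesis unfolding feasible_direction_def using d(1) by (intro exI[of _ "d/2"]) auto
  qed
  then show thesis using g x0 that by blast
qed

lemma lap_eq_sum_quadratic_form:
  fixes M :: "real^'n^'n"
  shows "lap M = (\<Sum>i\<in>UNIV. (M *v axis i 1) \<bullet> axis i 1)"
  by (simp add: lap_def matrix_vector_mult_basis inner_axis column_def)

text \<open>The zero Neumann condition makes the gradient tangential, so a minimum on the boundary
  still sees a whole open half-space of feasible directions.\<close>
lemma neumann_min_imp_grad_eq_0_lap_nonneg:
  fixes f :: "real^'n \<Rightarrow> real"
  assumes dom: "C11_domain_with_normal \<Omega> nrm"
    and f': "\<forall>y\<in>closure \<Omega>. (f has_derivative (\<lambda>h. fx y \<bullet> h)) (at y within closure \<Omega>)"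
    and f'': "\<forall>y\<in>closure \<Omega>. (fx has_derivative (\<lambda>h. fxx y *v h)) (at y within closure \<Omega>)"
    and x0: "x0 \<in> closure \<Omega>" and min: "\<forall>y\<in>closure \<Omega>. f x0 \<le> f y"
    and neumann: "x0 \<in> frontier \<Omega> \<Longrightarrow> fx x0 \<bullet> nrm x0 = 0"
  shows "fx x0 = 0 \<and> 0 \<le> lap (fxx x0)"
proof -
  have grad: "0 \<le> fx x0 \<bullet> h" if "feasible_direction (closure \<Omega>) x0 h" for h
    using f' that min by (rule min_imp_directional_deriv_nonneg)
  obtain g where g: "g \<noteq> 0" "fx x0 \<bullet> g = 0"
    "\<forall>h. g \<bullet> h < 0 \<longrightarrow> feasible_direction (closure \<Omega>) x0 h"
  proof (cases "x0 \<in> frontier \<Omega>")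
    case True
    obtain g where "g \<noteq> 0" "nrm x0 = (1 / norm g) *\<^sub>R g"
      "\<forall>h. g \<bullet> h < 0 \<longrightarrow> feasible_direction (closure \<Omega>) x0 h"
      by (rule C11_domain_frontier_inward[OF dom True])
    moreover from this neumann[OF True] have "fx x0 \<bullet> g = 0" by simp
    ultimately show thesis using that by blast
  next
    case False
    then have "x0 \<in> interior (closure \<Omega>)"
      using x0 interior_mono[OF closure_subset, of \<Omega>] by (auto simp: frontier_def)
    then have all: "feasible_direction (closure \<Omega>) x0 h" for h
      by (rule feasible_direction_interior)
    have "0 \<le> fx x0 \<bullet> (- fx x0)" by (rule grad[OF all])
    then have "fx x0 \<bullet> fx x0 \<le> 0" by simp
    then have "fx x0 = 0" by (meson inner_gt_zero_iff not_le)
    then show thesis using that[of "axis undefined 1"] all by (simp add: axis_eq_0_iff)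
  qed
  have "g \<bullet> (- fx x0 - g) < 0"
    using g(1,2) by (simp add: inner_diff_right inner_commute)
  then have "0 \<le> fx x0 \<bullet> (- fx x0 - g)"
    using g(3) grad by blast
  then have "fx x0 \<bullet> fx x0 \<le> 0" using g(2) by (simp add: inner_diff_right)
  then have grad0: "fx x0 = 0" by (meson inner_gt_zero_iff not_le)
  have "0 \<le> (fxx x0 *v h) \<bullet> h" for h
  proof (rule quadratic_form_nonneg_of_halfspace[OF g(1)], intro allI impI)
    fix h assume "g \<bullet> h < 0"
    with g(3) show "0 \<le> (fxx x0 *v h) \<bullet> h"
      using min_imp_directional_second_deriv_nonneg[OF f' f'' _ min grad0] by blast
  qed
  then show ?thesis using grad0 by (simp add: lap_eq_sum_quadratic_form sum_nonneg)
qed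

section \<open>From almost everywhere to everywhere\<close>

lemma AE_nonneg_imp_nonneg_on_open:
  fixes G :: "'a::euclidean_space \<Rightarrow> real"
  assumes "open U" "continuous_on U G" "AE x in lebesgue. x \<in> U \<longrightarrow> 0 \<le> G x"
  shows "\<forall>x\<in>U. 0 \<le> G x"
proof (rule ccontr)
  assume "\<not> ?thesis"
  then have ne: "U \<inter> G -` {..<0} \<noteq> {}" by force
  have "open (U \<inter> G -` {..<0})"
    using continuous_open_preimage[OF assms(2,1)] by auto
  moreover obtain N where N: "{x \<in> space lebesgue. \<not> (x \<in> U \<longrightarrow> 0 \<le> G x)} \<subseteq> N"
    "N \<in> null_sets lebesgue"
    using assms(3) unfolding eventually_ae_filter by blast
  have "U \<inter> G -` {..<0} \<subseteq> N" using N(1) by force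
  then have "negligible (U \<inter> G -` {..<0})"
    using N(2) negligible_iff_null_sets negligible_subset by blast
  ultimately show False using open_not_negligible ne by blast
qed

lemma AE_nonneg_where_neg_imp_nonneg:
  fixes u G :: "'a::euclidean_space \<Rightarrow> real"
  assumes "open V" "continuous_on V u" "continuous_on V G"
    and "AE q in lebesgue. q \<in> V \<longrightarrow> u q < 0 \<longrightarrow> 0 \<le> G q"
  shows "\<forall>q\<in>V. u q < 0 \<longrightarrow> 0 \<le> G q"
proof -
  have "open (V \<inter> u -` {..<0})"
    using continuous_open_preimage[OF assms(2,1)] by auto
  moreover have "continuous_on (V \<inter> u -` {..<0}) G"
    using assms(3) by (rule continuous_on_subset) auto
  moreover have "AE q in lebesgue. q \<in> V \<inter> u -` {..<0} \<longrightarrow> 0 \<le> G q"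
    using assms(4) by eventually_elim auto
  ultimately have "\<forall>q\<in>V \<inter> u -` {..<0}. 0 \<le> G q"
    by (rule AE_nonneg_imp_nonneg_on_open)
  then show ?thesis by auto
qed

lemma nonneg_at_closure_point_where_neg:
  fixes u L :: "'a::metric_space \<Rightarrow> real"
  assumes u: "continuous_on (closure \<Omega>) u" and L: "continuous_on (closure \<Omega>) L"
    and super: "\<forall>y\<in>\<Omega>. u y < 0 \<longrightarrow> 0 \<le> L y" and x: "x \<in> closure \<Omega>" "u x < 0"
  shows "0 \<le> L x"
proof -
  have cl: "x \<in> closure {y\<in>\<Omega>. u y < 0}"
    unfolding closure_approachable
  proof (intro allI impI)
    fix e :: real assume "e > 0"
    obtain d where d: "d > 0" "\<forall>y\<in>closure \<Omega>. dist y x < d \<longrightarrow> dist (u y) (u x) < - u x"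
      using u x unfolding continuous_on_iff by (meson neg_0_less_iff_less)
    obtain y where y: "y \<in> \<Omega>" "dist y x < min d e"
      using x \<open>e > 0\<close> d(1) unfolding closure_approachable by (metis min_less_iff_conj)
    then have "u y < 0" using d closure_subset by (force simp: dist_real_def)
    with y show "\<exists>y\<in>{y\<in>\<Omega>. u y < 0}. dist y x < e" by auto
  qed
  have "closure {y\<in>\<Omega>. u y < 0} \<subseteq> closure \<Omega>" by (intro closure_mono) auto
  then have "continuous_on (closure {y\<in>\<Omega>. u y < 0}) L" by (rule continuous_on_subset[OF L])
  then show ?thesis by (rule continuous_ge_on_closure[OF _ cl]) (use super in auto)
qed

lemma continuous_on_Pair_slice:
  assumes "continuous_on (A \<times> B) (\<lambda>(s, y). f s y)" "s \<in> A"
  shows "continuous_on B (f s)"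
proof -
  have "continuous_on B ((\<lambda>(s, y). f s y) \<circ> Pair s)"
    using assms by (intro continuous_on_compose continuous_intros) (auto elim: continuous_on_subset)
  then show ?thesis by (simp add: o_def)
qed

lemma continuous_on_Times_slice:
  assumes "continuous_on (A \<times> B \<times> C) (\<lambda>(t, x, r). f t x r)" "r \<in> C"
  shows "continuous_on (A \<times> B) (\<lambda>(t, x). f t x r)"
proof -
  have "continuous_on (A \<times> B) ((\<lambda>(t, x, r). f t x r) \<circ> (\<lambda>(t, x). (t, x, r)))"
    using assms unfolding split_def
    by (intro continuous_on_compose continuous_intros) (auto elim: continuous_on_subset)
  then show ?thesis by (simp add: o_def split_def)
qed

lemma continuous_on_lap:
  fixes M :: "'a::topological_space \<Rightarrow> real^'n^'n"
  assumes "continuous_on S M"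
  shows "continuous_on S (\<lambda>q. lap (M q))"
  unfolding lap_def by (intro continuous_intros assms)

lemma continuous_on_symgrad:
  fixes M :: "'a::topological_space \<Rightarrow> real^'n^'n"
  assumes "continuous_on S M"
  shows "continuous_on S (\<lambda>q. symgrad (M q))"
proof -
  have "continuous_on S (\<lambda>q. transpose (M q))"
    unfolding transpose_def by (intro continuous_intros assms)
  then show ?thesis unfolding symgrad_def by (intro continuous_intros assms)
qed

lemma continuous_on_rate_along_flow:
  fixes \<beta> :: "real \<Rightarrow> real^'n \<Rightarrow> real^'n^'n \<Rightarrow> real"
    and v :: "real \<Rightarrow> real^'n \<Rightarrow> real^'n" and vx :: "real \<Rightarrow> real^'n \<Rightarrow> real^'n^'n"
  assumes \<beta>: "continuous_on ({r0<..} \<times> UNIV) (\<lambda>(r, u, D). \<beta> r u D)"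
    and v: "continuous_on (A \<times> B) (\<lambda>(t, x). v t x)" and vx: "continuous_on (A \<times> B) (\<lambda>(t, x). vx t x)"
  shows "continuous_on (A \<times> B \<times> {r0<..}) (\<lambda>(t, x, r). \<beta> r (v t x) (symgrad (vx t x)))"
proof -
  have "continuous_on (A \<times> B \<times> {r0<..}) (\<lambda>q. (\<lambda>(t, x). v t x) (fst q, fst (snd q)))"
    by (rule continuous_on_compose2[OF v]) (auto intro!: continuous_intros)
  moreover have "continuous_on (A \<times> B \<times> {r0<..}) (\<lambda>q. (\<lambda>(t, x). vx t x) (fst q, fst (snd q)))"
    by (rule continuous_on_compose2[OF vx]) (auto intro!: continuous_intros)
  ultimately have "continuous_on (A \<times> B \<times> {r0<..}) (\<lambda>q. (\<lambda>(r, u, D). \<beta> r u D)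
      (snd (snd q), v (fst q) (fst (snd q)), symgrad (vx (fst q) (fst (snd q)))))"
    by (intro continuous_on_compose2[OF \<beta>] continuous_intros continuous_on_symgrad) auto
  then show ?thesis by (simp add: split_def)
qed

section \<open>The parabolic minimum principle\<close>

text \<open>The minimum of \<open>exp (- (C + 1) * t) * u t x\<close> is taken instead of that of \<open>u\<close>: the weight
  turns the lower bound \<open>c \<ge> - C\<close> into a strictly positive zeroth-order coefficient.\<close>
lemma parabolic_minimum_principle:
  fixes u ut c :: "real \<Rightarrow> real^'n \<Rightarrow> real" and ux b :: "real \<Rightarrow> real^'n \<Rightarrow> real^'n"
    and uxx :: "real \<Rightarrow> real^'n \<Rightarrow> real^'n^'n"
  assumes dom: "C11_domain_with_normal \<Omega> nrm"
    and u': "\<forall>t\<in>{0..T}. \<forall>x\<in>closure \<Omega>.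
          ((\<lambda>s. u s x) has_real_derivative ut t x) (at t within {0..T}) \<and>
          ((\<lambda>y. u t y) has_derivative (\<lambda>h. ux t x \<bullet> h)) (at x within closure \<Omega>) \<and>
          ((\<lambda>y. ux t y) has_derivative (\<lambda>h. uxx t x *v h)) (at x within closure \<Omega>)"
    and u_cont: "continuous_on ({0..T} \<times> closure \<Omega>) (\<lambda>(t, x). u t x)"
    and init: "\<forall>x\<in>\<Omega>. 0 \<le> u 0 x"
    and neumann: "\<forall>t\<in>{0<..<T}. \<forall>x\<in>frontier \<Omega>. ux t x \<bullet> nrm x = 0"
    and a: "0 \<le> a" and c: "\<forall>t\<in>{0<..<T}. \<forall>x\<in>closure \<Omega>. - C \<le> c t x"
    and L_cont: "\<forall>t\<in>{0<..<T}. continuous_on (closure \<Omega>)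
          (\<lambda>x. ut t x + b t x \<bullet> ux t x - a * lap (uxx t x) + c t x * u t x)"
    and super: "\<forall>t\<in>{0<..<T}. \<forall>x\<in>\<Omega>. u t x < 0 \<longrightarrow>
          0 \<le> ut t x + b t x \<bullet> ux t x - a * lap (uxx t x) + c t x * u t x"
    and t: "t \<in> {0..<T}" and x: "x \<in> closure \<Omega>"
  shows "0 \<le> u t x"
proof (rule ccontr)
  assume "\<not> 0 \<le> u t x"
  define l where "l = C + 1"
  define S where "S = {0..t} \<times> closure \<Omega>"
  have "compact S"
    using dom unfolding S_def C11_domain_with_normal_def by (intro compact_Times) auto
  moreover have "S \<noteq> {}" using t x by (auto simp: S_def)
  moreover have "continuous_on S (\<lambda>(s, y). u s y)"
    using t by (intro continuous_on_subset[OF u_cont]) (auto simp: S_def)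
  then have "continuous_on S (\<lambda>(s, y). exp (- l * s) * u s y)"
    unfolding split_def by (intro continuous_on_mult) (auto intro!: continuous_intros)
  ultimately obtain p where p: "p \<in> S"
    and p_min: "\<forall>q\<in>S. (\<lambda>(s, y). exp (- l * s) * u s y) p \<le> (\<lambda>(s, y). exp (- l * s) * u s y) q"
    by (blast dest: continuous_attains_inf)
  obtain t0 x0 where p_eq: "p = (t0, x0)" by (cases p)
  have t0: "0 \<le> t0" "t0 \<le> t" "t0 < T" and x0: "x0 \<in> closure \<Omega>"
    using p p_eq t by (auto simp: S_def)
  have min: "\<forall>s\<in>{0..t}. \<forall>y\<in>closure \<Omega>. exp (- l * t0) * u t0 x0 \<le> exp (- l * s) * u s y"
    using p_min p_eq by (auto simp: S_def)
  have "exp (- l * t0) * u t0 x0 \<le> exp (- l * t) * u t x"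
    using min t x by auto
  also have "\<dots> < 0" using \<open>\<not> 0 \<le> u t x\<close> by (simp add: mult_pos_neg)
  finally have neg: "u t0 x0 < 0" by (simp add: mult_less_0_iff)
  have "continuous_on (closure \<Omega>) (u 0)"
    by (rule continuous_on_Pair_slice[OF u_cont]) (use t in auto)
  then have "0 \<le> u 0 x0" by (rule continuous_ge_on_closure[OF _ x0]) (use init in auto)
  then have "0 < t0" using neg t0 by (cases "t0 = 0") auto
  have time: "ut t0 x0 \<le> l * u t0 x0"
    by (rule weighted_left_min_imp_deriv_le[of _ _ _ T])
      (use u' t0 x0 min \<open>0 < t0\<close> in auto)
  have space: "ux t0 x0 = 0 \<and> 0 \<le> lap (uxx t0 x0)"
  proof (rule neumann_min_imp_grad_eq_0_lap_nonneg[OF dom _ _ x0])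
    show "\<forall>y\<in>closure \<Omega>. u t0 x0 \<le> u t0 y"
    proof
      fix y assume "y \<in> closure \<Omega>"
      then have "exp (- l * t0) * u t0 x0 \<le> exp (- l * t0) * u t0 y" using min t0 by auto
      then show "u t0 x0 \<le> u t0 y" by simp
    qed
  qed (use u' neumann t0 \<open>0 < t0\<close> in auto)
  have "continuous_on (closure \<Omega>) (u t0)"
    by (rule continuous_on_Pair_slice[OF u_cont]) (use t0 in auto)
  then have "0 \<le> ut t0 x0 + b t0 x0 \<bullet> ux t0 x0 - a * lap (uxx t0 x0) + c t0 x0 * u t0 x0"
    using L_cont super t0 \<open>0 < t0\<close> x0 neg by (intro nonneg_at_closure_point_where_neg) auto
  also have "\<dots> \<le> (l + c t0 x0) * u t0 x0"
    using time space mult_nonneg_nonneg[OF a, of "lap (uxx t0 x0)"] by (simp add: algebra_simps)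
  also have "\<dots> < 0"
  proof (rule mult_pos_neg[OF _ neg])
    show "0 < l + c t0 x0" using c t0 \<open>0 < t0\<close> x0 by (force simp: l_def)
  qed
  finally show False by simp
qed

lemma parabolic_nonneg_AE:
  fixes u ut :: "real \<Rightarrow> real^'n \<Rightarrow> real" and ux b :: "real \<Rightarrow> real^'n \<Rightarrow> real^'n"
    and uxx :: "real \<Rightarrow> real^'n \<Rightarrow> real^'n^'n"
  assumes dom: "C11_domain_with_normal \<Omega> nrm"
    and u': "\<forall>t\<in>{0..T}. \<forall>x\<in>closure \<Omega>.
          ((\<lambda>s. u s x) has_real_derivative ut t x) (at t within {0..T}) \<and>
          ((\<lambda>y. u t y) has_derivative (\<lambda>h. ux t x \<bullet> h)) (at x within closure \<Omega>) \<and>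
          ((\<lambda>y. ux t y) has_derivative (\<lambda>h. uxx t x *v h)) (at x within closure \<Omega>)"
    and cont: "continuous_on ({0..T} \<times> closure \<Omega>) (\<lambda>(t, x). u t x)"
      "continuous_on ({0..T} \<times> closure \<Omega>) (\<lambda>(t, x). ut t x)"
      "continuous_on ({0..T} \<times> closure \<Omega>) (\<lambda>(t, x). ux t x)"
      "continuous_on ({0..T} \<times> closure \<Omega>) (\<lambda>(t, x). uxx t x)"
      "continuous_on ({0..T} \<times> closure \<Omega>) (\<lambda>(t, x). b t x)"
    and init: "\<forall>x\<in>\<Omega>. 0 \<le> u 0 x"
    and neumann: "\<forall>t\<in>{0<..<T}. \<forall>x\<in>frontier \<Omega>. ux t x \<bullet> nrm x = 0"
    and a: "0 \<le> a"
    and eq: "AE (t, x) in lebesgue. (t, x) \<in> {0<..<T} \<times> \<Omega> \<longrightarrow>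
          ut t x + b t x \<bullet> ux t x - a * lap (uxx t x) = - u t x * I t x + F t x"
    and I: "\<forall>t\<in>{0<..<T}. \<forall>x\<in>\<Omega>. - C \<le> I t x" and F: "\<forall>t\<in>{0<..<T}. \<forall>x\<in>\<Omega>. 0 \<le> F t x"
  shows "\<forall>t\<in>{0..<T}. \<forall>x\<in>closure \<Omega>. 0 \<le> u t x"
proof -
  define L where "L t x = ut t x + b t x \<bullet> ux t x - a * lap (uxx t x) - C * u t x" for t x
  have reaction: "q \<in> {0<..<T} \<times> \<Omega> \<longrightarrow> (\<lambda>(t, x). u t x) q < 0 \<longrightarrow> 0 \<le> (\<lambda>(t, x). L t x) q"
    if "(\<lambda>(t, x). (t, x) \<in> {0<..<T} \<times> \<Omega> \<longrightarrow>
        ut t x + b t x \<bullet> ux t x - a * lap (uxx t x) = - u t x * I t x + F t x) q" for q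
  proof (cases q, intro impI)
    fix t x assume q: "q = (t, x)" and tx: "q \<in> {0<..<T} \<times> \<Omega>" "(\<lambda>(t, x). u t x) q < 0"
    have "- C \<le> I t x" "0 \<le> F t x" using I F tx q by auto
    moreover have "0 \<le> - u t x * (I t x + C)"
      using \<open>- C \<le> I t x\<close> tx q by (intro mult_nonneg_nonneg) auto
    ultimately have "0 \<le> - u t x * (I t x + C) + F t x" by simp
    then show "0 \<le> (\<lambda>(t, x). L t x) q" using that tx q by (simp add: L_def algebra_simps)
  qed
  have L_cont: "continuous_on ({0..T} \<times> closure \<Omega>) (\<lambda>(t, x). L t x)"
    using cont unfolding L_def split_def
    by (intro continuous_intros continuous_on_lap) auto
  have sub: "{0<..<T} \<times> \<Omega> \<subseteq> {0..T} \<times> closure \<Omega>"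
    using closure_subset by auto
  have "\<forall>q\<in>{0<..<T} \<times> \<Omega>. (\<lambda>(t, x). u t x) q < 0 \<longrightarrow> 0 \<le> (\<lambda>(t, x). L t x) q"
  proof (rule AE_nonneg_where_neg_imp_nonneg)
    show "open ({0<..<T} \<times> \<Omega>)"
      using dom unfolding C11_domain_with_normal_def by (intro open_Times) auto
    show "continuous_on ({0<..<T} \<times> \<Omega>) (\<lambda>(t, x). u t x)"
      by (rule continuous_on_subset[OF cont(1) sub])
    show "continuous_on ({0<..<T} \<times> \<Omega>) (\<lambda>(t, x). L t x)"
      by (rule continuous_on_subset[OF L_cont sub])
    show "AE q in lebesgue. q \<in> {0<..<T} \<times> \<Omega> \<longrightarrow>
        (\<lambda>(t, x). u t x) q < 0 \<longrightarrow> 0 \<le> (\<lambda>(t, x). L t x) q"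
      using eq by (rule eventually_mono) (rule reaction)
  qed
  then have pointwise: "\<forall>t\<in>{0<..<T}. \<forall>x\<in>\<Omega>. u t x < 0 \<longrightarrow> 0 \<le> L t x" by auto
  show ?thesis
  proof (intro ballI, rule parabolic_minimum_principle[OF dom u' cont(1) init neumann a])
    show "\<forall>t\<in>{0<..<T}. \<forall>x\<in>closure \<Omega>. - C \<le> - C" by simp
    show "\<forall>t\<in>{0<..<T}. continuous_on (closure \<Omega>)
          (\<lambda>x. ut t x + b t x \<bullet> ux t x - a * lap (uxx t x) + - C * u t x)"
      using continuous_on_Pair_slice[OF L_cont] by (simp add: L_def)
    show "\<forall>t\<in>{0<..<T}. \<forall>x\<in>\<Omega>. u t x < 0 \<longrightarrow>
          0 \<le> ut t x + b t x \<bullet> ux t x - a * lap (uxx t x) + - C * u t x"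
      using pointwise by (simp add: L_def)
  qed
qed

lemma parametric_parabolic_nonneg_AE:
  fixes u ut c :: "real \<Rightarrow> real^'n \<Rightarrow> real \<Rightarrow> real" and ux :: "real \<Rightarrow> real^'n \<Rightarrow> real \<Rightarrow> real^'n"
    and uxx :: "real \<Rightarrow> real^'n \<Rightarrow> real \<Rightarrow> real^'n^'n"
    and b :: "real \<Rightarrow> real^'n \<Rightarrow> real^'n" and a :: "real \<Rightarrow> real"
  assumes dom: "C11_domain_with_normal \<Omega> nrm"
    and u': "\<forall>t\<in>{0..T}. \<forall>x\<in>closure \<Omega>. \<forall>r>r0.
          ((\<lambda>s. u s x r) has_real_derivative ut t x r) (at t within {0..T}) \<and>
          ((\<lambda>y. u t y r) has_derivative (\<lambda>h. ux t x r \<bullet> h)) (at x within closure \<Omega>) \<and>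
          ((\<lambda>y. ux t y r) has_derivative (\<lambda>h. uxx t x r *v h)) (at x within closure \<Omega>)"
    and cont: "continuous_on ({0..T} \<times> closure \<Omega> \<times> {r0<..}) (\<lambda>(t, x, r). u t x r)"
      "continuous_on ({0..T} \<times> closure \<Omega> \<times> {r0<..}) (\<lambda>(t, x, r). ut t x r)"
      "continuous_on ({0..T} \<times> closure \<Omega> \<times> {r0<..}) (\<lambda>(t, x, r). ux t x r)"
      "continuous_on ({0..T} \<times> closure \<Omega> \<times> {r0<..}) (\<lambda>(t, x, r). uxx t x r)"
      "continuous_on ({0..T} \<times> closure \<Omega> \<times> {r0<..}) (\<lambda>(t, x, r). c t x r)"
      "continuous_on ({0..T} \<times> closure \<Omega>) (\<lambda>(t, x). b t x)"
      "continuous_on {r0<..} a"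
    and init: "\<forall>x\<in>\<Omega>. \<forall>r>r0. 0 \<le> u 0 x r"
    and neumann: "\<forall>t\<in>{0<..<T}. \<forall>x\<in>frontier \<Omega>. \<forall>r>r0. ux t x r \<bullet> nrm x = 0"
    and a: "\<forall>r>r0. 0 \<le> a r" and c: "\<forall>t\<in>{0<..<T}. \<forall>x\<in>closure \<Omega>. \<forall>r>r0. 0 \<le> c t x r"
    and super: "AE (t, x, r) in lebesgue. (t, x, r) \<in> {0<..<T} \<times> \<Omega> \<times> {r0<..} \<longrightarrow> u t x r < 0 \<longrightarrow>
          0 \<le> ut t x r + b t x \<bullet> ux t x r - a r * lap (uxx t x r) + c t x r * u t x r"
  shows "\<forall>t\<in>{0..<T}. \<forall>x\<in>closure \<Omega>. \<forall>r>r0. 0 \<le> u t x r"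
proof (intro ballI allI impI)
  define S where "S = {0..T} \<times> closure \<Omega> \<times> {r0<..}"
  define L where "L t x r = ut t x r + b t x \<bullet> ux t x r - a r * lap (uxx t x r) + c t x r * u t x r"
    for t x r
  have "continuous_on S (\<lambda>q. (\<lambda>(t, x). b t x) (fst q, fst (snd q)))"
    by (rule continuous_on_compose2[OF cont(6)]) (auto simp: S_def intro!: continuous_intros)
  moreover have "continuous_on S (\<lambda>q. a (snd (snd q)))"
    by (rule continuous_on_compose2[OF cont(7)]) (auto simp: S_def intro!: continuous_intros)
  ultimately have L_cont: "continuous_on S (\<lambda>(t, x, r). L t x r)"
    using cont(1-5) unfolding L_def split_def S_def
    by (intro continuous_intros continuous_on_lap) auto
  have sub: "{0<..<T} \<times> \<Omega> \<times> {r0<..} \<subseteq> S"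
    using closure_subset by (auto simp: S_def)
  have "\<forall>q\<in>{0<..<T} \<times> \<Omega> \<times> {r0<..}. (\<lambda>(t, x, r). u t x r) q < 0 \<longrightarrow> 0 \<le> (\<lambda>(t, x, r). L t x r) q"
  proof (rule AE_nonneg_where_neg_imp_nonneg)
    show "open ({0<..<T} \<times> \<Omega> \<times> {r0<..})"
      using dom unfolding C11_domain_with_normal_def by (intro open_Times) auto
    show "continuous_on ({0<..<T} \<times> \<Omega> \<times> {r0<..}) (\<lambda>(t, x, r). u t x r)"
      using cont(1) sub unfolding S_def by (rule continuous_on_subset)
    show "continuous_on ({0<..<T} \<times> \<Omega> \<times> {r0<..}) (\<lambda>(t, x, r). L t x r)"
      using L_cont sub by (rule continuous_on_subset)
    show "AE q in lebesgue. q \<in> {0<..<T} \<times> \<Omega> \<times> {r0<..} \<longrightarrow>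
        (\<lambda>(t, x, r). u t x r) q < 0 \<longrightarrow> 0 \<le> (\<lambda>(t, x, r). L t x r) q"
      using super by (rule eventually_mono) (auto simp: L_def)
  qed
  then have pointwise: "\<forall>t\<in>{0<..<T}. \<forall>x\<in>\<Omega>. u t x r < 0 \<longrightarrow> 0 \<le> L t x r" if "r > r0" for r
    using that by auto
  fix t x r
  assume "t \<in> {0..<T}" "x \<in> closure \<Omega>" "r0 < r"
  have L_slice: "continuous_on ({0..T} \<times> closure \<Omega>) (\<lambda>(t, x). L t x r)"
    by (rule continuous_on_Times_slice[OF L_cont[unfolded S_def]]) (use \<open>r0 < r\<close> in auto)
  show "0 \<le> u t x r"
  proof (rule parabolic_minimum_principle[where u = "\<lambda>t x. u t x r" and C = 0, OF dom])
    show "continuous_on ({0..T} \<times> closure \<Omega>) (\<lambda>(t, x). u t x r)"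
      by (rule continuous_on_Times_slice[OF cont(1)]) (use \<open>r0 < r\<close> in auto)
    show "\<forall>t\<in>{0<..<T}. continuous_on (closure \<Omega>)
        (\<lambda>x. ut t x r + b t x \<bullet> ux t x r - a r * lap (uxx t x r) + c t x r * u t x r)"
      using continuous_on_Pair_slice[OF L_slice] by (simp add: L_def)
    show "\<forall>t\<in>{0<..<T}. \<forall>x\<in>\<Omega>. u t x r < 0 \<longrightarrow>
        0 \<le> ut t x r + b t x \<bullet> ux t x r - a r * lap (uxx t x r) + c t x r * u t x r"
      using pointwise[OF \<open>r0 < r\<close>] by (simp add: L_def)
  qed (use u' init neumann a c \<open>r0 < r\<close> \<open>t \<in> {0..<T}\<close> \<open>x \<in> closure \<Omega>\<close> in auto)
qed

section \<open>Bounds on the integral terms\<close>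

lemma set_integral_nonneg:
  fixes f :: "'a \<Rightarrow> real"
  assumes "\<And>x. x \<in> A \<Longrightarrow> 0 \<le> f x"
  shows "0 \<le> (\<integral>x\<in>A. f x \<partial>M)"
  unfolding set_lebesgue_integral_def
  by (rule integral_nonneg_AE) (auto intro!: AE_I2 simp: indicator_def assms)

lemma set_integral_kappa_nonneg:
  assumes "\<forall>rr>r0. 0 \<le> g rr"
  shows "0 \<le> (\<integral>rr\<in>A. g rr * kappa r0 r rr * pos (f rr) \<partial>M)"
  using assms by (intro set_integral_nonneg) (auto simp: kappa_def pos_def)

lemma set_integrable_powr_Ioi:
  fixes r0 e :: real
  assumes "0 < r0" "e < -1"
  shows "set_integrable lborel {r0<..} (\<lambda>r. r powr e)"
proof -
  have "((\<lambda>r. r powr e) has_integral -(r0 powr (e + 1)) / (e + 1)) {r0..}"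
    using assms by (intro has_integral_powr_to_inf) auto
  then have "(\<lambda>r. r powr e) absolutely_integrable_on {r0..}"
    by (subst absolutely_integrable_on_iff_nonneg) (auto simp: has_integral_integrable)
  then have "set_integrable lebesgue {r0<..} (\<lambda>r::real. r powr e)"
    by (rule set_integrable_subset) auto
  then show ?thesis unfolding set_integrable_def
    by (subst (asm) integrable_completion) auto
qed

lemma set_integral_ge_of_decay:
  fixes w p :: "real \<Rightarrow> real"
  assumes "0 < r0" "m \<le> 0" and w: "\<forall>r>r0. m \<le> w r"
    and p: "\<forall>r>r0. 0 \<le> p r \<and> p r \<le> B * r powr -2"
  shows "m * B * (\<integral>r\<in>{r0<..}. r powr -2 \<partial>lborel) \<le> (\<integral>r\<in>{r0<..}. w r * p r \<partial>lborel)"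
proof -
  have "0 \<le> B * (r0 + 1) powr -2" using p[rule_format, of "r0 + 1"] by simp
  then have "0 \<le> B" using \<open>0 < r0\<close> by (simp add: zero_le_mult_iff)
  have int: "set_integrable lborel {r0<..} (\<lambda>r. m * B * r powr -2)"
    using set_integrable_powr_Ioi[OF \<open>0 < r0\<close>, of "-2"] by (intro set_integrable_mult_right) auto
  show ?thesis
  proof (cases "set_integrable lborel {r0<..} (\<lambda>r. w r * p r)")
    case True
    have "m * B * r powr -2 \<le> w r * p r" if "r \<in> {r0<..}" for r
    proof -
      have "m * (B * r powr -2) \<le> m * p r" using p that \<open>m \<le> 0\<close> by (intro mult_left_mono_neg) auto
      also have "\<dots> \<le> w r * p r" using p w that by (intro mult_right_mono) auto
      finally show ?thesis by (simp add: mult.assoc)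
    qed
    with set_integral_mono[OF int True] show ?thesis by simp
  next
    case False
    then have "(\<integral>r\<in>{r0<..}. w r * p r \<partial>lborel) = 0"
      unfolding set_integrable_def set_lebesgue_integral_def by (rule not_integrable_integral_eq)
    moreover have "0 \<le> (\<integral>r\<in>{r0<..}. r powr -2 \<partial>lborel)" by (rule set_integral_nonneg) simp
    ultimately show ?thesis
      using \<open>m \<le> 0\<close> \<open>0 \<le> B\<close> by (simp add: mult_nonpos_nonneg mult_nonpos_nonneg[of "m * B"])
  qed
qed

lemma bounded_weighted_imp_decay:
  fixes f F :: "'a \<Rightarrow> 'b \<Rightarrow> real \<Rightarrow> real"
  assumes "bounded ((\<lambda>(t, x, r). (1 + r) powr 2 * F t x r) ` (A \<times> B \<times> R))"
    and "\<forall>t\<in>A. \<forall>x\<in>B. \<forall>r\<in>R. 0 < r \<and> \<bar>f t x r\<bar> \<le> F t x r"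
  obtains M where "\<forall>t\<in>A. \<forall>x\<in>B. \<forall>r\<in>R. \<bar>f t x r\<bar> \<le> M * r powr -2"
proof -
  obtain M where M: "\<forall>t\<in>A. \<forall>x\<in>B. \<forall>r\<in>R. \<bar>(1 + r) powr 2 * F t x r\<bar> \<le> M"
    using assms(1) unfolding bounded_iff by fastforce
  have "\<forall>t\<in>A. \<forall>x\<in>B. \<forall>r\<in>R. \<bar>f t x r\<bar> \<le> M * r powr -2"
  proof (intro ballI)
    fix t x r assume txr: "t \<in> A" "x \<in> B" "r \<in> R"
    then have r: "0 < r" "\<bar>f t x r\<bar> \<le> F t x r" using assms(2) by auto
    have "r powr 2 * \<bar>f t x r\<bar> \<le> (1 + r) powr 2 * F t x r"
      using r by (intro mult_mono powr_mono2) auto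
    also have "\<dots> \<le> M" using M txr by fastforce
    finally show "\<bar>f t x r\<bar> \<le> M * r powr -2"
      using r by (simp add: powr_minus field_simps)
  qed
  then show thesis by (rule that)
qed

text \<open>Where \<open>f\<close> has no derivative, \<open>deriv f x\<close> is the unspecified constant
  \<open>SOME D. False\<close>, which a lower bound on \<open>deriv f\<close> must allow for.\<close>
lemma deriv_lower_bound:
  fixes f :: "real \<Rightarrow> real"
  assumes "\<forall>D. (f has_real_derivative D) (at x) \<longrightarrow> m \<le> D"
  shows "min m (SOME D::real. False) \<le> deriv f x"
proof (cases "\<exists>D. (f has_real_derivative D) (at x)")
  case True
  then obtain D where "(f has_real_derivative D) (at x)" by blast
  then show ?thesis using assms DERIV_imp_deriv by fastforce
next
  case False
  then have "deriv f x = (SOME D::real. False)" unfolding deriv_def by simp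
  then show ?thesis by simp
qed

lemma has_real_derivative_times_nonneg:
  fixes \<tau> :: "real \<Rightarrow> real"
  assumes "0 < r" and D: "((\<lambda>s. s * \<tau> s) has_real_derivative D) (at r)"
    and \<tau>': "\<forall>E. (\<tau> has_real_derivative E) (at r within S) \<longrightarrow> 0 \<le> \<tau> r + r * E"
  shows "0 \<le> D"
proof -
  have "((\<lambda>s. s * \<tau> s / s) has_real_derivative (D * r - r * \<tau> r * 1) / (r * r)) (at r)"
    using \<open>0 < r\<close> by (intro DERIV_divide[OF D DERIV_ident]) simp
  then have "(\<tau> has_real_derivative (D * r - r * \<tau> r * 1) / (r * r)) (at r)"
    by (rule has_field_derivative_transform_within_open[of _ _ _ "{0<..}"]) (use \<open>0 < r\<close> in auto)
  moreover have "(D * r - r * \<tau> r * 1) / (r * r) = (D - \<tau> r) / r"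
    using \<open>0 < r\<close> by (simp add: field_simps)
  ultimately have "(\<tau> has_real_derivative (D - \<tau> r) / r) (at r within S)"
    by (simp add: has_field_derivative_at_within)
  then have "0 \<le> \<tau> r + r * ((D - \<tau> r) / r)" using \<tau>' by blast
  then show ?thesis using \<open>0 < r\<close> by simp
qed

lemma integral_deriv_times_pos_lower_bound:
  fixes \<tau> :: "real \<Rightarrow> real" and u ut ur :: "real \<Rightarrow> 'a \<Rightarrow> real \<Rightarrow> real"
    and ux :: "real \<Rightarrow> 'a \<Rightarrow> real \<Rightarrow> 'b::real_normed_vector"
    and uxx :: "real \<Rightarrow> 'a \<Rightarrow> real \<Rightarrow> 'c::real_normed_vector"
  assumes "0 < r0" and \<tau>': "\<forall>r>r0. \<forall>E. (\<tau> has_real_derivative E) (at r within S) \<longrightarrow> 0 \<le> \<tau> r + r * E"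
    and weighted: "\<forall>m\<ge>0. bounded ((\<lambda>(t, x, r). (1 + r) powr m *
          (\<bar>u t x r\<bar> + \<bar>ut t x r\<bar> + \<bar>ur t x r\<bar> + norm (ux t x r) + norm (uxx t x r)))
          ` (A \<times> X \<times> {r0..}))"
  obtains C where "\<forall>t\<in>A. \<forall>x\<in>X. - C \<le> (\<integral>r\<in>{r0<..}. deriv (\<lambda>s. s * \<tau> s) r * pos (u t x r) \<partial>lborel)"
proof -
  have dominated:
    "\<bar>u t x r\<bar> \<le> \<bar>u t x r\<bar> + \<bar>ut t x r\<bar> + \<bar>ur t x r\<bar> + norm (ux t x r) + norm (uxx t x r)"
    for t x r
    using abs_ge_zero[of "ut t x r"] abs_ge_zero[of "ur t x r"] norm_ge_zero[of "ux t x r"]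
      norm_ge_zero[of "uxx t x r"] by linarith
  obtain B where decay: "\<forall>t\<in>A. \<forall>x\<in>X. \<forall>r\<in>{r0..}. \<bar>u t x r\<bar> \<le> B * r powr -2"
    by (rule bounded_weighted_imp_decay[OF weighted[rule_format, of 2]])
      (use \<open>0 < r0\<close> in \<open>auto intro: dominated\<close>)
  define m where "m = min 0 (SOME D::real. False)"
  have m: "m \<le> deriv (\<lambda>s. s * \<tau> s) r" if "r > r0" for r
  proof -
    have "0 < r" "\<forall>E. (\<tau> has_real_derivative E) (at r within S) \<longrightarrow> 0 \<le> \<tau> r + r * E"
      using \<open>0 < r0\<close> that \<tau>' by auto
    then have "\<forall>D. ((\<lambda>s. s * \<tau> s) has_real_derivative D) (at r) \<longrightarrow> 0 \<le> D"
      using has_real_derivative_times_nonneg by blast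
    then show ?thesis unfolding m_def by (rule deriv_lower_bound)
  qed
  have "\<forall>t\<in>A. \<forall>x\<in>X. m * B * (\<integral>r\<in>{r0<..}. r powr -2 \<partial>lborel)
      \<le> (\<integral>r\<in>{r0<..}. deriv (\<lambda>s. s * \<tau> s) r * pos (u t x r) \<partial>lborel)"
  proof (intro ballI)
    fix t x assume "t \<in> A" "x \<in> X"
    show "m * B * (\<integral>r\<in>{r0<..}. r powr -2 \<partial>lborel)
        \<le> (\<integral>r\<in>{r0<..}. deriv (\<lambda>s. s * \<tau> s) r * pos (u t x r) \<partial>lborel)"
    proof (rule set_integral_ge_of_decay[OF \<open>0 < r0\<close>])
      show "\<forall>r>r0. 0 \<le> pos (u t x r) \<and> pos (u t x r) \<le> B * r powr -2"
      proof (intro allI impI)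
        fix r assume "r0 < r"
        then have "\<bar>u t x r\<bar> \<le> B * r powr -2" using decay \<open>t \<in> A\<close> \<open>x \<in> X\<close> by auto
        then show "0 \<le> pos (u t x r) \<and> pos (u t x r) \<le> B * r powr -2"
          unfolding pos_def by linarith
      qed
    qed (use m in \<open>auto simp: m_def\<close>)
  qed
  then show thesis by (intro that[of "- (m * B * (\<integral>r\<in>{r0<..}. r powr -2 \<partial>lborel))"]) simp
qed

theorem lemma3p1:
  fixes \<Omega> :: "(real^'n) set" and nrm :: "real^'n \<Rightarrow> real^'n"
    and T r0 K A0 :: real
    and A :: "real \<Rightarrow> real" and \<tau> :: "real \<Rightarrow> real"
    and \<beta> :: "real \<Rightarrow> real^'n \<Rightarrow> real^'n^'n \<Rightarrow> real"
    and v vt :: "real \<Rightarrow> real^'n \<Rightarrow> real^'n" and vx :: "real \<Rightarrow> real^'n \<Rightarrow> real^'n^'n"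
    and \<psi> \<psi>t \<psi>r :: "real \<Rightarrow> real^'n \<Rightarrow> real \<Rightarrow> real"
    and \<psi>x :: "real \<Rightarrow> real^'n \<Rightarrow> real \<Rightarrow> real^'n"
    and \<psi>xx :: "real \<Rightarrow> real^'n \<Rightarrow> real \<Rightarrow> real^'n^'n"
    and \<psi>0 :: "real^'n \<Rightarrow> real \<Rightarrow> real"
    and \<phi> \<phi>t :: "real \<Rightarrow> real^'n \<Rightarrow> real"
    and \<phi>x :: "real \<Rightarrow> real^'n \<Rightarrow> real^'n"
    and \<phi>xx :: "real \<Rightarrow> real^'n \<Rightarrow> real^'n^'n"
    and \<phi>0 :: "real^'n \<Rightarrow> real"
  assumes dim: "CARD('n) = 2 \<or> CARD('n) = 3"
    and dom: "C11_domain_with_normal \<Omega> nrm"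
    and T: "T > 0" and r0: "r0 > 0" and K: "K > 0" and A0: "A0 > 0"
    \<comment> \<open>(A1)\<close>
    and A1: "continuous_on {r0<..} A" "\<forall>r>r0. A r > 0"
      "\<forall>r s. r0 < r \<and> r \<le> s \<longrightarrow> A s \<le> A r" "(A \<longlongrightarrow> 0) at_top"
    \<comment> \<open>(A2)\<close>
    and A2: "\<forall>r\<ge>r0. \<tau> r \<ge> 0" "mono_on {r0..} \<tau>" "bounded (\<tau> ` {r0..})"
      "\<exists>L. \<forall>r\<ge>r0. \<forall>s\<ge>r0. \<bar>\<tau> r - \<tau> s\<bar> \<le> L * \<bar>r - s\<bar>"
      "\<tau> r0 = 0"
      "\<exists>D. (\<tau> has_real_derivative D) (at r0 within {r0..}) \<and> D > 0"
      "\<forall>r\<ge>r0. \<forall>D. (\<tau> has_real_derivative D) (at r within {r0..}) \<longrightarrow>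
          r0 / K \<le> \<tau> r + r * D \<and> \<tau> r + D + r * D + \<tau> r / r \<le> K"
    \<comment> \<open>(A3)\<close>
    and A3: "smooth_on ({r0<..} \<times> UNIV) (\<lambda>(r, u, D). \<beta> r u D)"
      "\<forall>r s u D. r0 < r \<and> r \<le> s \<longrightarrow> \<beta> r u D \<le> \<beta> s u D"
      "\<forall>r>r0. \<forall>u D. 0 < \<beta> r u D \<and> \<beta> r u D \<le> K"
      "\<forall>r>r0. bdd_above (range (\<lambda>uD. deriv (\<lambda>s. \<beta> s (fst uD) (snd uD)) r / \<beta> r (fst uD) (snd uD)))"
      "set_borel_measurable lborel {r0<..} (eta \<beta>)"
      "\<forall>r>r0. 0 \<le> eta \<beta> r \<and> (1 + r) * eta \<beta> r \<le> K"
      "(\<integral>\<^sup>+ r\<in>{r0<..}. ennreal (eta \<beta> r) \<partial>lborel) \<le> ennreal K"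
    \<comment> \<open>velocity field: C^1 on [0,T] x closure Omega, divergence free, tangential\<close>
    and v_C1: "\<forall>t\<in>{0..T}. \<forall>x\<in>closure \<Omega>.
        ((\<lambda>(s, y). v s y) has_derivative (\<lambda>(h, k). h *\<^sub>R vt t x + vx t x *v k))
          (at (t, x) within {0..T} \<times> closure \<Omega>)"
      "continuous_on ({0..T} \<times> closure \<Omega>) (\<lambda>(t, x). v t x)"
      "continuous_on ({0..T} \<times> closure \<Omega>) (\<lambda>(t, x). vt t x)"
      "continuous_on ({0..T} \<times> closure \<Omega>) (\<lambda>(t, x). vx t x)"
    and v_div: "\<forall>t\<in>{0<..<T}. \<forall>x\<in>\<Omega>. (\<Sum>i\<in>UNIV. vx t x $ i $ i) = 0"
    and v_bdry: "\<forall>t\<in>{0<..<T}. \<forall>x\<in>frontier \<Omega>. v t x \<bullet> nrm x = 0"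
    \<comment> \<open>regularity of psi\<close>
    and psi_reg: "\<forall>t\<in>{0..T}. \<forall>x\<in>closure \<Omega>. \<forall>r\<in>{r0..}.
          ((\<lambda>s. \<psi> s x r) has_real_derivative \<psi>t t x r) (at t within {0..T}) \<and>
          ((\<lambda>s. \<psi> t x s) has_real_derivative \<psi>r t x r) (at r within {r0..}) \<and>
          ((\<lambda>y. \<psi> t y r) has_derivative (\<lambda>h. \<psi>x t x r \<bullet> h)) (at x within closure \<Omega>) \<and>
          ((\<lambda>y. \<psi>x t y r) has_derivative (\<lambda>h. \<psi>xx t x r *v h)) (at x within closure \<Omega>)"
      "continuous_on ({0..T} \<times> closure \<Omega> \<times> {r0..}) (\<lambda>(t, x, r). \<psi> t x r)"
      "continuous_on ({0..T} \<times> closure \<Omega> \<times> {r0..}) (\<lambda>(t, x, r). \<psi>t t x r)"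
      "continuous_on ({0..T} \<times> closure \<Omega> \<times> {r0..}) (\<lambda>(t, x, r). \<psi>r t x r)"
      "continuous_on ({0..T} \<times> closure \<Omega> \<times> {r0..}) (\<lambda>(t, x, r). \<psi>x t x r)"
      "continuous_on ({0..T} \<times> closure \<Omega> \<times> {r0..}) (\<lambda>(t, x, r). \<psi>xx t x r)"
      "\<forall>m\<ge>0. bounded ((\<lambda>(t, x, r). (1 + r) powr m *
          (\<bar>\<psi> t x r\<bar> + \<bar>\<psi>t t x r\<bar> + \<bar>\<psi>r t x r\<bar> + norm (\<psi>x t x r) + norm (\<psi>xx t x r)))
          ` ({0..T} \<times> closure \<Omega> \<times> {r0..}))"
    \<comment> \<open>regularity of phi\<close>
    and phi_reg: "\<forall>t\<in>{0..T}. \<forall>x\<in>closure \<Omega>.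
          ((\<lambda>s. \<phi> s x) has_real_derivative \<phi>t t x) (at t within {0..T}) \<and>
          ((\<lambda>y. \<phi> t y) has_derivative (\<lambda>h. \<phi>x t x \<bullet> h)) (at x within closure \<Omega>) \<and>
          ((\<lambda>y. \<phi>x t y) has_derivative (\<lambda>h. \<phi>xx t x *v h)) (at x within closure \<Omega>)"
      "continuous_on ({0..T} \<times> closure \<Omega>) (\<lambda>(t, x). \<phi> t x)"
      "continuous_on ({0..T} \<times> closure \<Omega>) (\<lambda>(t, x). \<phi>t t x)"
      "continuous_on ({0..T} \<times> closure \<Omega>) (\<lambda>(t, x). \<phi>x t x)"
      "continuous_on ({0..T} \<times> closure \<Omega>) (\<lambda>(t, x). \<phi>xx t x)"
    \<comment> \<open>Neumann boundary conditions\<close>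
    and psi_neumann: "\<forall>t\<in>{0<..<T}. \<forall>x\<in>frontier \<Omega>. \<forall>r\<in>{r0<..}. \<psi>x t x r \<bullet> nrm x = 0"
    and phi_neumann: "\<forall>t\<in>{0<..<T}. \<forall>x\<in>frontier \<Omega>. \<phi>x t x \<bullet> nrm x = 0"
    \<comment> \<open>initial conditions\<close>
    and psi_init: "\<forall>x\<in>\<Omega>. \<forall>r\<in>{r0..}. \<psi> 0 x r = \<psi>0 x r" "\<forall>x\<in>\<Omega>. \<forall>r\<in>{r0..}. \<psi>0 x r \<ge> 0"
    and phi_init: "\<forall>x\<in>\<Omega>. \<phi> 0 x = \<phi>0 x" "\<forall>x\<in>\<Omega>. \<phi>0 x \<ge> 0"
    \<comment> \<open>the modified system, almost everywhere\<close>
    and psi_eq: "AE (t, x, r) in lebesgue. (t, x, r) \<in> {0<..<T} \<times> \<Omega> \<times> {r0<..} \<longrightarrow>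
        \<psi>t t x r + v t x \<bullet> \<psi>x t x r - A r * lap (\<psi>xx t x r) =
          - \<beta> r (v t x) (symgrad (vx t x)) * \<psi> t x r
          - \<tau> r * \<phi> t x * (if \<psi> t x r > 0 then \<psi>r t x r else 0)
          + 2 * (\<integral>rr\<in>{r<..}. \<beta> rr (v t x) (symgrad (vx t x)) * kappa r0 r rr * pos (\<psi> t x rr) \<partial>lborel)"
    and phi_eq: "AE (t, x) in lebesgue. (t, x) \<in> {0<..<T} \<times> \<Omega> \<longrightarrow>
        \<phi>t t x + v t x \<bullet> \<phi>x t x - A0 * lap (\<phi>xx t x) =
          - \<phi> t x * (\<integral>r\<in>{r0<..}. deriv (\<lambda>s. s * \<tau> s) r * pos (\<psi> t x r) \<partial>lborel)
          + 2 * (\<integral>r\<in>{0<..<r0}. r * (\<integral>rr\<in>{r0<..}. \<beta> rr (v t x) (symgrad (vx t x))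
                  * kappa r0 r rr * pos (\<psi> t x rr) \<partial>lborel) \<partial>lborel)"
  shows "(AE (t, x, r) in lebesgue. (t, x, r) \<in> {0<..<T} \<times> \<Omega> \<times> {r0<..} \<longrightarrow> \<psi> t x r \<ge> 0) \<and>
         (AE (t, x) in lebesgue. (t, x) \<in> {0<..<T} \<times> \<Omega> \<longrightarrow> \<phi> t x \<ge> 0)"
proof -
  have \<beta>_cont: "continuous_on ({r0<..} \<times> UNIV) (\<lambda>(r, u, D). \<beta> r u D)"
    using A3(1) unfolding smooth_on_def by (metis Ck_on.simps(1))
  have \<beta>_nonneg: "\<forall>rr>r0. 0 \<le> \<beta> rr u D" for u D
    using A3(3) by (simp add: less_imp_le)
  have gain_nonneg: "0 \<le> (\<integral>rr\<in>A. \<beta> rr u D * kappa r0 r rr * pos (f rr) \<partial>lborel)" for A u D r f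
    by (rule set_integral_kappa_nonneg[OF \<beta>_nonneg])
  have sub: "{0..T} \<times> closure \<Omega> \<times> {r0<..} \<subseteq> {0..T} \<times> closure \<Omega> \<times> {r0..}" by auto
  have \<psi>_nonneg: "\<forall>t\<in>{0..<T}. \<forall>x\<in>closure \<Omega>. \<forall>r>r0. 0 \<le> \<psi> t x r"
  proof (rule parametric_parabolic_nonneg_AE[OF dom _ continuous_on_subset[OF psi_reg(2) sub]
        continuous_on_subset[OF psi_reg(3) sub] continuous_on_subset[OF psi_reg(5) sub]
        continuous_on_subset[OF psi_reg(6) sub] continuous_on_rate_along_flow[OF \<beta>_cont v_C1(2,4)]
        v_C1(2) A1(1)])
    show "AE (t, x, r) in lebesgue. (t, x, r) \<in> {0<..<T} \<times> \<Omega> \<times> {r0<..} \<longrightarrow> \<psi> t x r < 0 \<longrightarrow>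
        0 \<le> \<psi>t t x r + v t x \<bullet> \<psi>x t x r - A r * lap (\<psi>xx t x r)
          + \<beta> r (v t x) (symgrad (vx t x)) * \<psi> t x r"
      using psi_eq by (rule eventually_mono) (auto intro: gain_nonneg)
  qed (use psi_reg(1) psi_init psi_neumann A1(2) A3(3) in \<open>auto simp: less_imp_le\<close>)
  have \<tau>_growth: "\<forall>r>r0. \<forall>E. (\<tau> has_real_derivative E) (at r within {r0..}) \<longrightarrow> 0 \<le> \<tau> r + r * E"
    using A2(7) divide_pos_pos[OF r0 K] by (meson less_imp_le order_trans)
  obtain C where C: "\<forall>t\<in>{0..T}. \<forall>x\<in>closure \<Omega>.
      - C \<le> (\<integral>r\<in>{r0<..}. deriv (\<lambda>s. s * \<tau> s) r * pos (\<psi> t x r) \<partial>lborel)"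
    by (rule integral_deriv_times_pos_lower_bound[OF r0 \<tau>_growth psi_reg(7)])
  have \<phi>_nonneg: "\<forall>t\<in>{0..<T}. \<forall>x\<in>closure \<Omega>. 0 \<le> \<phi> t x"
  proof (rule parabolic_nonneg_AE[where C = C, OF dom phi_reg v_C1(2) _ phi_neumann less_imp_le[OF A0] phi_eq])
    show "\<forall>t\<in>{0<..<T}. \<forall>x\<in>\<Omega>. 0 \<le> 2 * (\<integral>r\<in>{0<..<r0}. r * (\<integral>rr\<in>{r0<..}.
        \<beta> rr (v t x) (symgrad (vx t x)) * kappa r0 r rr * pos (\<psi> t x rr) \<partial>lborel) \<partial>lborel)"
      by (auto intro!: set_integral_nonneg mult_nonneg_nonneg gain_nonneg)
    show "\<forall>t\<in>{0<..<T}. \<forall>x\<in>\<Omega>.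
        - C \<le> (\<integral>r\<in>{r0<..}. deriv (\<lambda>s. s * \<tau> s) r * pos (\<psi> t x r) \<partial>lborel)"
    proof (intro ballI)
      fix t x assume "t \<in> {0<..<T}" "x \<in> \<Omega>"
      then have "t \<in> {0..T}" "x \<in> closure \<Omega>" using closure_subset by auto
      then show "- C \<le> (\<integral>r\<in>{r0<..}. deriv (\<lambda>s. s * \<tau> s) r * pos (\<psi> t x r) \<partial>lborel)"
        using C by blast
    qed
  qed (use phi_init in auto)
  show ?thesis
    using \<psi>_nonneg \<phi>_nonneg closure_subset[of \<Omega>] by (intro conjI AE_I2) force+
qed

end
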